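(* If $b > a \geq 2$, then $I_{a,b} \geq P_a(a+b-1) \cdot P_b(a+b-1)$.
   Context: $K_{a,b}$ is the complete bipartite graph with partite sets of sizes $a$ and $b$. $I_{a,b}$ denotes the number of isomorphism classes (as unlabeled graphs) of spanning trees of $K_{a,b}$. $P_k(m)$ denotes the number of integer partitions of $m$ into exactly $k$ positive parts. *)

theory Defs
  imports Main "HOL-Library.Multiset"
begin

definition kab_verts :: "nat \<Rightarrow> nat \<Rightarrow> (nat + nat) set" where
  "kab_verts a b = Inl ` {..<a} \<union> Inr ` {..<b}"

definition kab_edges :: "nat \<Rightarrow> nat \<Rightarrow> (nat + nat) set set" where
  "kab_edges a b = {{Inl i, Inr j} | i j. i < a \<and> j < b}"

definition graph_connected :: "'v set \<Rightarrow> 'v set set \<Rightarrow> bool" where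
  "graph_connected V E \<longleftrightarrow>
     (\<forall>u\<in>V. \<forall>v\<in>V. (u, v) \<in> {(x, y). {x, y} \<in> E}\<^sup>*)"

definition has_cycle :: "'v set set \<Rightarrow> bool" where
  "has_cycle E \<longleftrightarrow>
     (\<exists>vs. 3 \<le> length vs \<and> distinct vs \<and>
        (\<forall>i < length vs. {vs ! i, vs ! ((i + 1) mod length vs)} \<in> E))"

definition is_tree :: "'v set \<Rightarrow> 'v set set \<Rightarrow> bool" where
  "is_tree V E \<longleftrightarrow> graph_connected V E \<and> \<not> has_cycle E"

definition spanning_tree_kab :: "nat \<Rightarrow> nat \<Rightarrow> (nat + nat) set set \<Rightarrow> bool" where
  "spanning_tree_kab a b T \<longleftrightarrow> T \<subseteq> kab_edges a b \<and> is_tree (kab_verts a b) T"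

definition graph_iso :: "'v set \<Rightarrow> 'v set set \<Rightarrow> 'v set set \<Rightarrow> bool" where
  "graph_iso V E1 E2 \<longleftrightarrow>
     (\<exists>f. bij_betw f V V \<and> (\<forall>u\<in>V. \<forall>v\<in>V. {u, v} \<in> E1 \<longleftrightarrow> {f u, f v} \<in> E2))"

definition I_kab :: "nat \<Rightarrow> nat \<Rightarrow> nat" where
  "I_kab a b = card ((\<lambda>T. {T'. spanning_tree_kab a b T' \<and> graph_iso (kab_verts a b) T T'})
                      ` {T. spanning_tree_kab a b T})"

definition P_parts :: "nat \<Rightarrow> nat \<Rightarrow> nat" where
  "P_parts k m = card {p :: nat multiset. size p = k \<and> sum_mset p = m \<and> (\<forall>x\<in>#p. 0 < x)}"

end

theory Submission
  imports Defs
begin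

text \<open>
  The degrees of a spanning tree of \<open>K\<^sub>a\<^sub>,\<^sub>b\<close> on the \<open>a\<close>-side form a partition of the number
  \<open>a + b - 1\<close> of its edges into \<open>a\<close> positive parts, and likewise on the \<open>b\<close>-side.
  Conversely every pair of such partitions occurs: removing a leaf from a side with at least two
  vertices reduces to a smaller instance. A tree, being connected, has only one bipartition, so an
  isomorphism of spanning trees either preserves or swaps the two sides, and since \<open>a < b\<close> it
  preserves them. Hence the pair of degree multisets is an isomorphism invariant, and the pairs of
  partitions inject into the isomorphism classes.
\<close>

lemma sum_fun_upd_nat:
  assumes "finite A" "x \<in> A"
  shows "sum (f(x := c)) A + f x = sum f A + (c :: nat)"
proof -
  have "sum (f(x := c)) (A - {x}) = sum f (A - {x})"
    by (rule sum.cong) auto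
  then show ?thesis
    using assms by (simp add: sum.remove)
qed

lemma ex_value_one_if_sum_less:
  fixes d :: "'a \<Rightarrow> nat"
  assumes "\<forall>v \<in> S. 0 < d v" "sum d S < 2 * card S"
  shows "\<exists>v \<in> S. d v = 1"
proof (rule ccontr)
  assume "\<not> ?thesis"
  then have "\<forall>v \<in> S. 2 \<le> d v"
    using assms(1) by (metis One_nat_def Suc_1 Suc_leI le_neq_implies_less)
  then show False
    using sum_mono[of S "\<lambda>_. 2" d] assms(2) by simp
qed

lemma ex_image_mset_mset_set:
  assumes "finite X" "size p = card X"
  obtains d where "image_mset d (mset_set X) = p"
  using assms
proof (induction X arbitrary: p thesis rule: finite_induct)
  case empty
  then show ?case by simp
next
  case (insert x X)
  obtain k where k: "k \<in># p"
    using insert.prems(2) insert.hyps by (metis card_insert_disjoint multiset_nonemptyE size_empty Zero_not_Suc)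
  obtain d where d: "image_mset d (mset_set X) = p - {#k#}"
    using insert.IH[of "p - {#k#}"] insert.prems(2) insert.hyps k by (auto simp: size_Diff_singleton)
  have "image_mset (d(x := k)) (mset_set X) = image_mset d (mset_set X)"
    using insert.hyps by (intro image_mset_cong) auto
  then have "image_mset (d(x := k)) (mset_set (insert x X)) = p"
    using insert.hyps d k by simp
  then show ?case
    by (rule insert.prems(1))
qed

lemma card_image_le_if_factors:
  assumes "finite S" "\<And>x y. x \<in> S \<Longrightarrow> y \<in> S \<Longrightarrow> h x = h y \<Longrightarrow> g x = g y"
  shows "card (g ` S) \<le> card (h ` S)"
proof -
  have "g ` S \<subseteq> (\<lambda>c. g (SOME x. x \<in> S \<and> h x = c)) ` h ` S"
  proof
    fix z
    assume "z \<in> g ` S"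
    then obtain x where x: "x \<in> S" "z = g x"
      by blast
    then have "g (SOME y. y \<in> S \<and> h y = h x) = z"
      using assms(2) by (metis (mono_tags, lifting) someI_ex)
    with x show "z \<in> (\<lambda>c. g (SOME x. x \<in> S \<and> h x = c)) ` h ` S"
      by (intro image_eqI[where x = "h x"]) auto
  qed
  then show ?thesis
    by (rule surj_card_le[OF finite_imageI[OF assms(1)]])
qed

section \<open>Trees grown by leaves\<close>

definition degree :: "'v set \<Rightarrow> 'v set set \<Rightarrow> 'v \<Rightarrow> nat" where
  "degree V E v = card {u \<in> V. {v, u} \<in> E}"

lemma is_tree_singleton: "is_tree {v} {}"
  unfolding is_tree_def graph_connected_def has_cycle_def
  by (auto intro!: exI[of _ 0])

lemma graph_connected_add_leaf:
  assumes "graph_connected V E" "x \<in> V"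
  shows "graph_connected (insert y V) (insert {x, y} E)"
proof -
  let ?r = "{(u, v). {u, v} \<in> E}" and ?r' = "{(u, v). {u, v} \<in> insert {x, y} E}"
  have "?r\<^sup>* \<subseteq> ?r'\<^sup>*"
    by (rule rtrancl_mono) auto
  then have old: "(u, v) \<in> ?r'\<^sup>*" if "u \<in> V" "v \<in> V" for u v
    using assms(1) that unfolding graph_connected_def by blast
  have via_x: "(u, x) \<in> ?r'\<^sup>* \<and> (x, u) \<in> ?r'\<^sup>*" if "u \<in> insert y V" for u
  proof (cases "u = y")
    case True
    then show ?thesis by (auto intro!: r_into_rtrancl simp: insert_commute)
  qed (use that old assms(2) in auto)
  show ?thesis
    unfolding graph_connected_def
  proof (intro ballI)
    fix u v
    assume "u \<in> insert y V" "v \<in> insert y V"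
    then show "(u, v) \<in> ?r'\<^sup>*"
      using via_x by (meson rtrancl_trans)
  qed
qed

lemma cycle_vertex_two_neighbours:
  assumes "3 \<le> length vs" "distinct vs"
    and cyc: "\<forall>i < length vs. {vs ! i, vs ! ((i + 1) mod length vs)} \<in> E"
    and "y \<in> set vs"
  shows "\<exists>u w. u \<noteq> w \<and> {u, y} \<in> E \<and> {y, w} \<in> E"
proof -
  let ?n = "length vs"
  obtain k where k: "k < ?n" "vs ! k = y"
    using assms(4) by (metis in_set_conv_nth)
  have next_edge: "{y, vs ! ((k + 1) mod ?n)} \<in> E"
    using cyc k by auto
  show ?thesis
  proof (cases "k = 0")
    case True
    have "{vs ! (?n - 1), y} \<in> E"
      using cyc[rule_format, of "?n - 1"] k True assms(1) by simp
    moreover have "vs ! (?n - 1) \<noteq> vs ! 1"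
      using assms(1,2) by (simp add: nth_eq_iff_index_eq)
    ultimately show ?thesis
      using next_edge True assms(1) by auto
  next
    case False
    have "{vs ! (k - 1), y} \<in> E"
      using cyc[rule_format, of "k - 1"] k False by simp
    moreover have "vs ! (k - 1) \<noteq> vs ! ((k + 1) mod ?n)"
      using assms(1,2) k False by (auto simp: nth_eq_iff_index_eq mod_if)
    ultimately show ?thesis
      using next_edge by blast
  qed
qed

lemma not_has_cycle_add_leaf:
  assumes "\<not> has_cycle E" "\<forall>e \<in> E. e \<subseteq> V" "x \<in> V" "y \<notin> V"
  shows "\<not> has_cycle (insert {x, y} E)"
proof
  assume "has_cycle (insert {x, y} E)"
  then obtain vs where vs: "3 \<le> length vs" "distinct vs"
    and cyc: "\<forall>i < length vs. {vs ! i, vs ! ((i + 1) mod length vs)} \<in> insert {x, y} E"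
    unfolding has_cycle_def by blast
  have only_x: "u = x" if "{u, y} \<in> insert {x, y} E" for u
    using that assms by (auto simp: doubleton_eq_iff)
  show False
  proof (cases "y \<in> set vs")
    case True
    then show False
      using cycle_vertex_two_neighbours[OF vs cyc] only_x by (metis insert_commute)
  next
    case False
    have "{vs ! i, vs ! ((i + 1) mod length vs)} \<noteq> {x, y}" if "i < length vs" for i
      using False that by (metis doubleton_eq_iff length_pos_if_in_set mod_less_divisor nth_mem)
    then have "\<forall>i < length vs. {vs ! i, vs ! ((i + 1) mod length vs)} \<in> E"
      using cyc by auto
    then show False
      using assms(1) vs unfolding has_cycle_def by blast
  qed
qed

lemma is_tree_add_leaf:
  assumes "is_tree V E" "\<forall>e \<in> E. e \<subseteq> V" "x \<in> V" "y \<notin> V"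
  shows "is_tree (insert y V) (insert {x, y} E)"
  using assms graph_connected_add_leaf not_has_cycle_add_leaf unfolding is_tree_def by metis

lemma degree_add_leaf:
  assumes "finite V" "\<forall>e \<in> E. e \<subseteq> V" "x \<in> V" "y \<notin> V"
  shows "degree (insert y V) (insert {x, y} E) v =
           (if v = y then 1 else if v = x then degree V E v + 1 else degree V E v)"
proof -
  have "{u \<in> insert y V. {v, u} \<in> insert {x, y} E} =
          (if v = y then {x} else if v = x then insert y {u \<in> V. {v, u} \<in> E} else {u \<in> V. {v, u} \<in> E})"
    using assms by (auto simp: doubleton_eq_iff)
  moreover have "card (insert y {u \<in> V. {w, u} \<in> E}) = card {u \<in> V. {w, u} \<in> E} + 1" for w
    using assms(1,4) by simp
  ultimately show ?thesis
    unfolding degree_def by simp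
qed

section \<open>Bipartite trees with prescribed degrees\<close>

definition bipartite_edges :: "'v set \<Rightarrow> 'v set \<Rightarrow> 'v set set" where
  "bipartite_edges X Y = {{x, y} | x y. x \<in> X \<and> y \<in> Y}"

lemma bipartite_edges_commute: "bipartite_edges Y X = bipartite_edges X Y"
  unfolding bipartite_edges_def by (auto simp: insert_commute)

lemma finite_bipartite_edges:
  assumes "finite X" "finite Y"
  shows "finite (bipartite_edges X Y)"
proof -
  have "bipartite_edges X Y = (\<lambda>(x, y). {x, y}) ` (X \<times> Y)"
    unfolding bipartite_edges_def by auto
  then show ?thesis
    using assms by simp
qed

text \<open>On each side the degrees of a tree on \<open>X \<union> Y\<close> add up to its number of edges.\<close>

definition admissible_degrees :: "'v set \<Rightarrow> 'v set \<Rightarrow> ('v \<Rightarrow> nat) \<Rightarrow> bool" where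
  "admissible_degrees X Y d \<longleftrightarrow>
     finite X \<and> finite Y \<and> X \<inter> Y = {} \<and> X \<noteq> {} \<and> Y \<noteq> {} \<and> (\<forall>v \<in> X \<union> Y. 0 < d v) \<and>
     sum d X + 1 = card X + card Y \<and> sum d Y + 1 = card X + card Y"

definition bipartite_tree_with_degrees :: "'v set \<Rightarrow> 'v set \<Rightarrow> ('v \<Rightarrow> nat) \<Rightarrow> 'v set set \<Rightarrow> bool" where
  "bipartite_tree_with_degrees X Y d T \<longleftrightarrow>
     T \<subseteq> bipartite_edges X Y \<and> is_tree (X \<union> Y) T \<and> (\<forall>v \<in> X \<union> Y. degree (X \<union> Y) T v = d v)"

lemma admissible_degrees_commute: "admissible_degrees Y X d \<longleftrightarrow> admissible_degrees X Y d"
  unfolding admissible_degrees_def by auto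

lemma bipartite_tree_with_degrees_commute:
  "bipartite_tree_with_degrees Y X d T \<longleftrightarrow> bipartite_tree_with_degrees X Y d T"
  unfolding bipartite_tree_with_degrees_def by (simp add: bipartite_edges_commute Un_commute)

lemma bipartite_tree_with_degrees_add_leaf:
  assumes T: "bipartite_tree_with_degrees X Y d T"
    and "finite X" "finite Y" "x \<in> X" "y \<notin> X \<union> Y"
  shows "bipartite_tree_with_degrees X (insert y Y) (d(x := d x + 1, y := 1)) (insert {x, y} T)"
proof -
  have edges: "\<forall>e \<in> T. e \<subseteq> X \<union> Y"
    using T unfolding bipartite_tree_with_degrees_def bipartite_edges_def by blast
  have V: "X \<union> insert y Y = insert y (X \<union> Y)"
    by blast
  have "insert {x, y} T \<subseteq> bipartite_edges X (insert y Y)"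
    using T \<open>x \<in> X\<close> unfolding bipartite_tree_with_degrees_def bipartite_edges_def by blast
  moreover have "is_tree (X \<union> insert y Y) (insert {x, y} T)"
    unfolding V using T edges assms(4,5)
    by (intro is_tree_add_leaf) (auto simp: bipartite_tree_with_degrees_def)
  moreover have "degree (X \<union> insert y Y) (insert {x, y} T) v = (d(x := d x + 1, y := 1)) v"
    if "v \<in> X \<union> insert y Y" for v
    unfolding V using that T assms degree_add_leaf[OF _ edges, of x y v]
    by (auto simp: bipartite_tree_with_degrees_def)
  ultimately show ?thesis
    unfolding bipartite_tree_with_degrees_def by blast
qed

lemma admissible_degrees_remove_leaf:
  assumes adm: "admissible_degrees X Y d" and y: "y \<in> Y" "d y = 1" "2 \<le> card Y"
  obtains x where "x \<in> X" "2 \<le> d x" "admissible_degrees X (Y - {y}) (d(x := d x - 1))"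
proof -
  have fin: "finite X" "finite Y" and disj: "X \<inter> Y = {}"
    and pos: "\<And>v. v \<in> X \<union> Y \<Longrightarrow> 0 < d v"
    using adm unfolding admissible_degrees_def by auto
  have "\<exists>x \<in> X. 2 \<le> d x"
  proof (rule ccontr)
    assume "\<not> ?thesis"
    then have "sum d X \<le> card X"
      using sum_mono[of X d "\<lambda>_. 1"] by fastforce
    then show False
      using adm y unfolding admissible_degrees_def by linarith
  qed
  then obtain x where x: "x \<in> X" "2 \<le> d x"
    by blast
  let ?d' = "d(x := d x - 1)"
  have sum_X: "sum ?d' X + 1 = sum d X"
    using sum_fun_upd_nat[OF fin(1) x(1), of d "d x - 1"] x(2) by simp
  have sum_Y: "sum ?d' (Y - {y}) + 1 = sum d Y"
  proof -
    have "sum ?d' (Y - {y}) = sum d (Y - {y})"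
      using x(1) disj by (intro sum.cong) auto
    then show ?thesis
      using fin(2) y by (simp add: sum.remove)
  qed
  have card_Y: "card (Y - {y}) + 1 = card Y"
    using y fin(2) by auto
  have "Y - {y} \<noteq> {}"
    using y(3) card_le_Suc0_iff_eq[OF fin(2)] by auto
  moreover have "\<forall>v \<in> X \<union> (Y - {y}). 0 < ?d' v"
    using pos x(2) by force
  ultimately have "admissible_degrees X (Y - {y}) ?d'"
    using adm sum_X sum_Y card_Y unfolding admissible_degrees_def by auto
  with x that show ?thesis
    by blast
qed

lemma admissible_degrees_cases:
  assumes adm: "admissible_degrees X Y d"
  obtains "card X = 1" "card Y = 1"
    | y where "y \<in> Y" "d y = 1" "2 \<le> card Y"
    | x where "x \<in> X" "d x = 1" "2 \<le> card X"
proof -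
  have pos: "\<forall>v \<in> X. 0 < d v" "\<forall>v \<in> Y. 0 < d v"
    and sums: "sum d X + 1 = card X + card Y" "sum d Y + 1 = card X + card Y"
    and ne: "card X \<noteq> 0" "card Y \<noteq> 0"
    using adm unfolding admissible_degrees_def by auto
  txt \<open>Both sides have degree sum \<open>|X| + |Y| - 1\<close>, which is below twice the size of the larger side.\<close>
  consider "card X = 1" "card Y = 1"
    | "2 \<le> card Y" "sum d Y < 2 * card Y"
    | "2 \<le> card X" "sum d X < 2 * card X"
    using sums ne by linarith
  then show ?thesis
    using that ex_value_one_if_sum_less[OF pos(1)] ex_value_one_if_sum_less[OF pos(2)] by metis
qed

lemma bipartite_tree_with_degrees_single_edge:
  assumes "x \<noteq> y" "d x = 1" "d y = 1"
  shows "bipartite_tree_with_degrees {x} {y} d {{x, y}}"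
  using assms is_tree_add_leaf[OF is_tree_singleton, of x x y] degree_add_leaf[of "{x}" "{}" x y]
  by (auto simp: bipartite_tree_with_degrees_def bipartite_edges_def degree_def insert_commute)

lemma ex_bipartite_tree_with_degrees_leaf:
  assumes adm: "admissible_degrees X Y d" and y: "y \<in> Y" "d y = 1" "2 \<le> card Y"
    and smaller: "\<And>d'. admissible_degrees X (Y - {y}) d' \<Longrightarrow>
      \<exists>T. bipartite_tree_with_degrees X (Y - {y}) d' T"
  shows "\<exists>T. bipartite_tree_with_degrees X Y d T"
proof -
  obtain x where x: "x \<in> X" "2 \<le> d x" and adm': "admissible_degrees X (Y - {y}) (d(x := d x - 1))"
    using admissible_degrees_remove_leaf[OF adm y] .
  obtain T where T: "bipartite_tree_with_degrees X (Y - {y}) (d(x := d x - 1)) T"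
    using smaller[OF adm'] by blast
  have fin: "finite X" "finite (Y - {y})" and new: "y \<notin> X \<union> (Y - {y})"
    using adm y(1) unfolding admissible_degrees_def by auto
  from bipartite_tree_with_degrees_add_leaf[OF T fin x(1) new]
  have "bipartite_tree_with_degrees X (insert y (Y - {y}))
          ((d(x := d x - 1))(x := d x - 1 + 1, y := 1)) (insert {x, y} T)"
    by simp
  moreover have "(d(x := d x - 1))(x := d x - 1 + 1, y := 1) = d"
    using x(2) y(2) by auto
  moreover have "insert y (Y - {y}) = Y"
    using y(1) by auto
  ultimately show ?thesis
    by auto
qed

lemma ex_bipartite_tree_with_degrees:
  assumes "admissible_degrees X Y d"
  shows "\<exists>T. bipartite_tree_with_degrees X Y d T"
  using assms
proof (induction "card X + card Y" arbitrary: X Y d rule: less_induct)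
  case less
  have fin: "finite X" "finite Y" and disj: "X \<inter> Y = {}"
    using less.prems unfolding admissible_degrees_def by auto
  from less.prems show ?case
  proof (cases rule: admissible_degrees_cases)
    case 1
    then obtain x y where XY: "X = {x}" "Y = {y}"
      by (meson card_1_singletonE)
    have "x \<noteq> y" "d x = 1" "d y = 1"
      using disj less.prems unfolding XY admissible_degrees_def by auto
    then have "bipartite_tree_with_degrees {x} {y} d {{x, y}}"
      by (rule bipartite_tree_with_degrees_single_edge)
    then show ?thesis
      unfolding XY ..
  next
    case (2 y)
    have "card X + card (Y - {y}) < card X + card Y"
      using card_Diff1_less[OF fin(2) \<open>y \<in> Y\<close>] by linarith
    from ex_bipartite_tree_with_degrees_leaf[OF less.prems 2 less.hyps[OF this]]
    show ?thesis .
  next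
    case (3 x)
    have "card Y + card (X - {x}) < card X + card Y"
      using card_Diff1_less[OF fin(1) \<open>x \<in> X\<close>] by linarith
    moreover have adm: "admissible_degrees Y X d"
      using less.prems by (simp add: admissible_degrees_commute)
    ultimately have "\<exists>T. bipartite_tree_with_degrees Y X d T"
      using ex_bipartite_tree_with_degrees_leaf[OF adm 3 less.hyps] by blast
    then show ?thesis
      by (simp add: bipartite_tree_with_degrees_commute)
  qed
qed

definition degree_profile :: "'v set \<Rightarrow> 'v set \<Rightarrow> 'v set set \<Rightarrow> nat multiset \<times> nat multiset" where
  "degree_profile X Y E =
     (image_mset (degree (X \<union> Y) E) (mset_set X), image_mset (degree (X \<union> Y) E) (mset_set Y))"

lemma ex_bipartite_tree_with_degree_profile:
  assumes XY: "finite X" "finite Y" "X \<inter> Y = {}" "X \<noteq> {}" "Y \<noteq> {}"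
    and p: "size p = card X" "sum_mset p + 1 = card X + card Y" "\<forall>k \<in># p. 0 < k"
    and q: "size q = card Y" "sum_mset q + 1 = card X + card Y" "\<forall>k \<in># q. 0 < k"
  obtains T where "T \<subseteq> bipartite_edges X Y" "is_tree (X \<union> Y) T" "degree_profile X Y T = (p, q)"
proof -
  obtain dX dY where dX: "image_mset dX (mset_set X) = p" and dY: "image_mset dY (mset_set Y) = q"
    using ex_image_mset_mset_set XY(1,2) p(1) q(1) by metis
  define d where "d v = (if v \<in> X then dX v else dY v)" for v
  have dp: "image_mset d (mset_set X) = p"
    using dX XY(1) unfolding d_def by (auto intro!: image_mset_cong)
  have dq: "image_mset d (mset_set Y) = q"
    using dY XY(2,3) unfolding d_def by (auto intro!: image_mset_cong)
  have "sum d X = sum_mset p" "sum d Y = sum_mset q"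
    unfolding sum_unfold_sum_mset dp dq by (rule refl)+
  moreover have "0 < d v" if "v \<in> X \<union> Y" for v
  proof -
    have "d v \<in># p \<or> d v \<in># q"
      using that XY(1,2) unfolding dp[symmetric] dq[symmetric] by auto
    then show ?thesis
      using p(3) q(3) by blast
  qed
  ultimately have "admissible_degrees X Y d"
    using XY p(2) q(2) unfolding admissible_degrees_def by auto
  then obtain T where T: "bipartite_tree_with_degrees X Y d T"
    using ex_bipartite_tree_with_degrees by blast
  then have "degree_profile X Y T = (image_mset d (mset_set X), image_mset d (mset_set Y))"
    unfolding degree_profile_def bipartite_tree_with_degrees_def using XY(1,2)
    by (auto intro!: image_mset_cong)
  with T that show ?thesis
    unfolding bipartite_tree_with_degrees_def dp dq by blast
qed

section \<open>Isomorphism invariance of the degree profile\<close>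

lemma graph_iso_refl: "graph_iso V E E"
  unfolding graph_iso_def by (metis bij_betw_id id_apply)

lemma graph_connected_invariant:
  assumes "graph_connected V E" "\<And>u v. {u, v} \<in> E \<Longrightarrow> P u = P v" "u \<in> V" "v \<in> V"
  shows "P u = P v"
proof -
  have "(u, v) \<in> {(x, y). {x, y} \<in> E}\<^sup>*"
    using assms(1,3,4) unfolding graph_connected_def by blast
  then show ?thesis
    by (induction rule: rtrancl_induct) (auto dest: assms(2))
qed

lemma graph_iso_degree:
  assumes bij: "bij_betw f V V" and adj: "\<forall>u \<in> V. \<forall>v \<in> V. {u, v} \<in> E1 \<longleftrightarrow> {f u, f v} \<in> E2"
    and "v \<in> V"
  shows "degree V E2 (f v) = degree V E1 v"
proof -
  have fV: "f ` V = V"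
    using bij by (simp add: bij_betw_def)
  have "{u \<in> V. {f v, u} \<in> E2} = f ` {u \<in> V. {v, u} \<in> E1}"
  proof (intro set_eqI iffI)
    fix u
    assume u: "u \<in> {u \<in> V. {f v, u} \<in> E2}"
    then obtain w where "w \<in> V" "u = f w"
      using fV by blast
    then show "u \<in> f ` {u \<in> V. {v, u} \<in> E1}"
      using u adj \<open>v \<in> V\<close> by auto
  qed (use adj \<open>v \<in> V\<close> fV in auto)
  moreover have "inj_on f {u \<in> V. {v, u} \<in> E1}"
    using bij_betw_imp_inj_on[OF bij] by (rule inj_on_subset) auto
  ultimately show ?thesis
    unfolding degree_def by (simp add: card_image)
qed

lemma image_mset_degree_graph_iso:
  assumes bij: "bij_betw f V V" and adj: "\<forall>u \<in> V. \<forall>v \<in> V. {u, v} \<in> E1 \<longleftrightarrow> {f u, f v} \<in> E2"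
    and S: "S \<subseteq> V" "f ` S = S"
  shows "image_mset (degree V E2) (mset_set S) = image_mset (degree V E1) (mset_set S)"
proof -
  have "inj_on f S"
    using bij_betw_imp_inj_on[OF bij] S(1) by (rule inj_on_subset)
  then have "image_mset (degree V E2) (mset_set S) = image_mset (degree V E2 \<circ> f) (mset_set S)"
    using S(2) by (metis image_mset_mset_set multiset.map_comp)
  also have "\<dots> = image_mset (degree V E1) (mset_set S)"
    using S(1) graph_iso_degree[OF bij adj] by (cases "finite S") (auto intro!: image_mset_cong)
  finally show ?thesis .
qed

lemma bij_betw_image_eq_if_preserves:
  assumes "bij_betw f V V" "S \<subseteq> V" "\<And>v. v \<in> V \<Longrightarrow> f v \<in> S \<longleftrightarrow> v \<in> S"
  shows "f ` S = S"
proof (intro subset_antisym subsetI)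
  show "s \<in> S" if "s \<in> f ` S" for s
    using that assms(2,3) by blast
  show "s \<in> f ` S" if "s \<in> S" for s
  proof -
    obtain v where "v \<in> V" "s = f v"
      using assms(1,2) \<open>s \<in> S\<close> unfolding bij_betw_def by blast
    then show ?thesis
      using \<open>s \<in> S\<close> assms(3) by blast
  qed
qed

lemma graph_iso_keeps_sides:
  assumes conn: "graph_connected (X \<union> Y) E1"
    and E: "E1 \<subseteq> bipartite_edges X Y" "E2 \<subseteq> bipartite_edges X Y"
    and disj: "X \<inter> Y = {}" and card: "finite X" "card X < card Y"
    and bij: "bij_betw f (X \<union> Y) (X \<union> Y)"
    and adj: "\<forall>u \<in> X \<union> Y. \<forall>v \<in> X \<union> Y. {u, v} \<in> E1 \<longleftrightarrow> {f u, f v} \<in> E2"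
    and "v \<in> X \<union> Y"
  shows "f v \<in> X \<longleftrightarrow> v \<in> X"
proof -
  have crossing: "u \<in> X \<union> Y \<and> w \<in> X \<union> Y \<and> (u \<in> X \<longleftrightarrow> w \<notin> X)"
    if "{u, w} \<in> bipartite_edges X Y" for u w
    using that disj unfolding bipartite_edges_def by (auto simp: doubleton_eq_iff)
  txt \<open>Both edge sets cross the bipartition, so \<open>keeps_side\<close> is constant along the connected \<open>E1\<close>;
    were it false everywhere, \<open>f\<close> would inject \<open>Y\<close> into the smaller \<open>X\<close>.\<close>
  define keeps_side where "keeps_side u \<longleftrightarrow> (f u \<in> X \<longleftrightarrow> u \<in> X)" for u
  have edge_invariant: "keeps_side u = keeps_side w" if "{u, w} \<in> E1" for u w
  proof -
    have uw: "u \<in> X \<union> Y" "w \<in> X \<union> Y" "u \<in> X \<longleftrightarrow> w \<notin> X"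
      using crossing that E(1) by blast+
    then have "{f u, f w} \<in> E2"
      using that adj by blast
    then have "f u \<in> X \<longleftrightarrow> f w \<notin> X"
      using crossing E(2) by blast
    then show ?thesis
      using uw(3) unfolding keeps_side_def by blast
  qed
  have same: "keeps_side u = keeps_side w" if "u \<in> X \<union> Y" "w \<in> X \<union> Y" for u w
    by (rule graph_connected_invariant[OF conn edge_invariant that])
  obtain y0 where y0: "y0 \<in> Y"
    using card(2) by fastforce
  have "keeps_side y0"
  proof (rule ccontr)
    assume "\<not> keeps_side y0"
    then have "\<not> keeps_side y" if "y \<in> Y" for y
      using same[of y y0] that y0 by blast
    then have "f ` Y \<subseteq> X"
      using disj unfolding keeps_side_def by blast
    moreover have "inj_on f Y"
      using bij_betw_imp_inj_on[OF bij] by (rule inj_on_subset) blast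
    ultimately have "card Y \<le> card X"
      using card_inj_on_le card(1) by blast
    then show False
      using card(2) by simp
  qed
  then show ?thesis
    using same[OF \<open>v \<in> X \<union> Y\<close>, of y0] y0 unfolding keeps_side_def by simp
qed

lemma graph_iso_preserves_sides:
  assumes "graph_connected (X \<union> Y) E1"
    and "E1 \<subseteq> bipartite_edges X Y" "E2 \<subseteq> bipartite_edges X Y"
    and disj: "X \<inter> Y = {}" and "finite X" "card X < card Y"
    and bij: "bij_betw f (X \<union> Y) (X \<union> Y)"
    and "\<forall>u \<in> X \<union> Y. \<forall>v \<in> X \<union> Y. {u, v} \<in> E1 \<longleftrightarrow> {f u, f v} \<in> E2"
  shows "f ` X = X" "f ` Y = Y"
proof -
  have keeps: "f v \<in> X \<longleftrightarrow> v \<in> X" if "v \<in> X \<union> Y" for v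
    using graph_iso_keeps_sides[OF assms that] .
  moreover have "f v \<in> X \<union> Y" if "v \<in> X \<union> Y" for v
    using bij that unfolding bij_betw_def by blast
  ultimately have "f v \<in> Y \<longleftrightarrow> v \<in> Y" if "v \<in> X \<union> Y" for v
    using that disj by blast
  with keeps show "f ` X = X" "f ` Y = Y"
    using bij_betw_image_eq_if_preserves[OF bij] by blast+
qed

lemma degree_profile_graph_iso:
  assumes "graph_connected (X \<union> Y) E1" "E1 \<subseteq> bipartite_edges X Y" "E2 \<subseteq> bipartite_edges X Y"
    and "X \<inter> Y = {}" "finite X" "card X < card Y"
    and "graph_iso (X \<union> Y) E1 E2"
  shows "degree_profile X Y E1 = degree_profile X Y E2"
proof -
  obtain f where bij: "bij_betw f (X \<union> Y) (X \<union> Y)"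
    and adj: "\<forall>u \<in> X \<union> Y. \<forall>v \<in> X \<union> Y. {u, v} \<in> E1 \<longleftrightarrow> {f u, f v} \<in> E2"
    using assms(7) unfolding graph_iso_def by blast
  show ?thesis
    unfolding degree_profile_def
    using image_mset_degree_graph_iso[OF bij adj]
      graph_iso_preserves_sides[OF assms(1-6) bij adj] by simp
qed

section \<open>Spanning trees of \<open>K\<^sub>a\<^sub>,\<^sub>b\<close>\<close>

abbreviation kab_left :: "nat \<Rightarrow> (nat + nat) set" where
  "kab_left a \<equiv> Inl ` {..<a}"

abbreviation kab_right :: "nat \<Rightarrow> (nat + nat) set" where
  "kab_right b \<equiv> Inr ` {..<b}"

lemma spanning_tree_kab_iff:
  "spanning_tree_kab a b T \<longleftrightarrow>
     T \<subseteq> bipartite_edges (kab_left a) (kab_right b) \<and> is_tree (kab_left a \<union> kab_right b) T"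
proof -
  have "kab_edges a b = bipartite_edges (kab_left a) (kab_right b)"
    unfolding kab_edges_def bipartite_edges_def by blast
  then show ?thesis
    unfolding spanning_tree_kab_def kab_verts_def by simp
qed

lemma finite_spanning_trees_kab: "finite {T. spanning_tree_kab a b T}"
proof (rule finite_subset)
  show "{T. spanning_tree_kab a b T} \<subseteq> Pow (bipartite_edges (kab_left a) (kab_right b))"
    unfolding spanning_tree_kab_iff by blast
  show "finite (Pow (bipartite_edges (kab_left a) (kab_right b)))"
    by (simp add: finite_bipartite_edges)
qed

lemma partition_pairs_subset_kab_degree_profiles:
  assumes "0 < a" "0 < b"
  shows "{p. size p = a \<and> sum_mset p = a + b - 1 \<and> (\<forall>x \<in># p. 0 < x)} \<times>
           {q. size q = b \<and> sum_mset q = a + b - 1 \<and> (\<forall>x \<in># q. 0 < x)}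
         \<subseteq> degree_profile (kab_left a) (kab_right b) ` {T. spanning_tree_kab a b T}"
proof
  fix pq
  assume "pq \<in> {p. size p = a \<and> sum_mset p = a + b - 1 \<and> (\<forall>x \<in># p. 0 < x)} \<times>
           {q. size q = b \<and> sum_mset q = a + b - 1 \<and> (\<forall>x \<in># q. 0 < x)}"
  then obtain p q where pq: "pq = (p, q)"
    and p: "size p = a" "sum_mset p = a + b - 1" "\<forall>x \<in># p. 0 < x"
    and q: "size q = b" "sum_mset q = a + b - 1" "\<forall>x \<in># q. 0 < x"
    by blast
  have card: "card (kab_left a) = a" "card (kab_right b) = b"
    by (simp_all add: card_image)
  have sides: "finite (kab_left a)" "finite (kab_right b)" "kab_left a \<inter> kab_right b = {}"
    "kab_left a \<noteq> {}" "kab_right b \<noteq> {}"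
    using assms by (auto simp: lessThan_empty_iff)
  have p': "size p = card (kab_left a)" "sum_mset p + 1 = card (kab_left a) + card (kab_right b)"
    and q': "size q = card (kab_right b)" "sum_mset q + 1 = card (kab_left a) + card (kab_right b)"
    using p q card assms by simp_all
  obtain T where "T \<subseteq> bipartite_edges (kab_left a) (kab_right b)" "is_tree (kab_left a \<union> kab_right b) T"
    and profile: "degree_profile (kab_left a) (kab_right b) T = (p, q)"
    by (rule ex_bipartite_tree_with_degree_profile[OF sides p'(1,2) p(3) q'(1,2) q(3)])
  then have "spanning_tree_kab a b T"
    unfolding spanning_tree_kab_iff by blast
  with profile show "pq \<in> degree_profile (kab_left a) (kab_right b) ` {T. spanning_tree_kab a b T}"
    unfolding pq by (metis imageI mem_Collect_eq)
qed

lemma degree_profile_kab_graph_iso: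
  assumes "a < b" "spanning_tree_kab a b T1" "spanning_tree_kab a b T2"
    and "graph_iso (kab_verts a b) T1 T2"
  shows "degree_profile (kab_left a) (kab_right b) T1 = degree_profile (kab_left a) (kab_right b) T2"
proof (rule degree_profile_graph_iso)
  show "graph_connected (kab_left a \<union> kab_right b) T1"
    using assms(2) unfolding spanning_tree_kab_iff is_tree_def by blast
  show "T1 \<subseteq> bipartite_edges (kab_left a) (kab_right b)" "T2 \<subseteq> bipartite_edges (kab_left a) (kab_right b)"
    using assms(2,3) unfolding spanning_tree_kab_iff by blast+
  show "card (kab_left a) < card (kab_right b)"
    using assms(1) by (simp add: card_image)
  show "graph_iso (kab_left a \<union> kab_right b) T1 T2"
    using assms(4) unfolding kab_verts_def .
qed auto

theorem theorem2p3:
  fixes a b :: nat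
  assumes "2 \<le> a" and "a < b"
  shows "P_parts a (a + b - 1) * P_parts b (a + b - 1) \<le> I_kab a b"
proof -
  let ?parts = "\<lambda>k. {p :: nat multiset. size p = k \<and> sum_mset p = a + b - 1 \<and> (\<forall>x \<in># p. 0 < x)}"
  let ?profile = "degree_profile (kab_left a) (kab_right b)"
  define trees where "trees = {T. spanning_tree_kab a b T}"
  define iso_class where "iso_class T = {T'. spanning_tree_kab a b T' \<and> graph_iso (kab_verts a b) T T'}" for T
  have "P_parts a (a + b - 1) * P_parts b (a + b - 1) = card (?parts a \<times> ?parts b)"
    unfolding P_parts_def by (simp add: card_cartesian_product)
  also have "\<dots> \<le> card (?profile ` trees)"
    using partition_pairs_subset_kab_degree_profiles[of a b] assms finite_spanning_trees_kab
    unfolding trees_def by (intro card_mono finite_imageI) auto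
  also have "\<dots> \<le> card (iso_class ` trees)"
  proof (rule card_image_le_if_factors)
    fix T1 T2
    assume T: "T1 \<in> trees" "T2 \<in> trees" "iso_class T1 = iso_class T2"
    then have "T2 \<in> iso_class T1"
      using graph_iso_refl unfolding iso_class_def trees_def by (metis (no_types, lifting) mem_Collect_eq)
    with T show "?profile T1 = ?profile T2"
      using degree_profile_kab_graph_iso assms(2) unfolding iso_class_def trees_def by blast
  qed (simp add: trees_def finite_spanning_trees_kab)
  also have "\<dots> = I_kab a b"
    unfolding I_kab_def trees_def iso_class_def ..
  finally show ?thesis .
qed

end
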